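(* Let $G$ be a compact group with identity $e$, let $A \subset G$ with $A = A^{-1}$ and $e \in A$, and let $\pi_0 = 1, \pi_1, \dots, \pi_m$ be pairwise distinct (non-isomorphic) irreducible unitary representations of $G$, realized as matrix-valued maps $\pi_i : G \to U(\dim \pi_i)$, with $\pi_0$ the trivial representation. Define \[ B_{\{1,\pi_1,\dots,\pi_m\}}(G,A) = \inf\Big\{ 1 + \sum_{i=1}^m \mathrm{tr}(\bm X_i) \;:\; \bm X_i \in \mathcal{S}^+_{\dim(\pi_i)} \text{ for } i \in [m],\; 1 + \sum_{i=1}^m \mathrm{tr}(\pi_i(g)\bm X_i^\top) \leq 0 \text{ for all } g \in A^c \Big\}, \] where $\mathcal{S}^+_\ell$ is the cone of $\ell \times \ell$ complex positive semidefinite matrices. If $\mu$ is a probability measure on $G$ with $\mathrm{supp}(\mu) \subseteq \overline{A^c}$ and $c > 0$ is such that $\widehat{\mu}(\pi_i) = \int \pi_i(g)\, d\mu(g) \succeq -c \bm I$ for all $i \in [m]$, then \[ B_{\{1,\pi_1,\dots,\pi_m\}}(G,A) \geq 1 + \frac{1}{c}. \]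
   Context: $A^c$ denotes the complement of $A$ in $G$ and $\overline{A^c}$ its closure; $\succeq$ is the positive semidefinite order; $[m] = \{1,\dots,m\}$. *)

theory Defs
  imports "HOL-Probability.Probability_Measure" "Jordan_Normal_Form.Schur_Decomposition"
begin

definition compact_group ::
  "('g::t2_space \<Rightarrow> 'g \<Rightarrow> 'g) \<Rightarrow> ('g \<Rightarrow> 'g) \<Rightarrow> 'g \<Rightarrow> bool" where
  "compact_group mul iv e \<longleftrightarrow>
     (\<forall>x y z. mul (mul x y) z = mul x (mul y z)) \<and>
     (\<forall>x. mul e x = x \<and> mul x e = x) \<and>
     (\<forall>x. mul (iv x) x = e \<and> mul x (iv x) = e) \<and>
     continuous_on UNIV (\<lambda>p::'g \<times> 'g. mul (fst p) (snd p)) \<and>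
     continuous_on UNIV iv \<and>
     compact (UNIV :: 'g set)"

definition mtrace :: "'a::comm_ring_1 mat \<Rightarrow> 'a" where
  "mtrace X = (\<Sum>i<dim_row X. X $$ (i, i))"

definition psd_mat :: "nat \<Rightarrow> complex mat \<Rightarrow> bool" where
  "psd_mat n X \<longleftrightarrow> X \<in> carrier_mat n n \<and> mat_adjoint X = X \<and>
     (\<forall>v \<in> carrier_vec n. 0 \<le> (X *\<^sub>v v) \<bullet>c v)"

definition unitary_mat :: "nat \<Rightarrow> complex mat \<Rightarrow> bool" where
  "unitary_mat n U \<longleftrightarrow> U \<in> carrier_mat n n \<and> U * mat_adjoint U = 1\<^sub>m n \<and> mat_adjoint U * U = 1\<^sub>m n"

definition unitary_rep ::
  "('g::topological_space \<Rightarrow> 'g \<Rightarrow> 'g) \<Rightarrow> nat \<Rightarrow> ('g \<Rightarrow> complex mat) \<Rightarrow> bool" where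
  "unitary_rep mul d \<rho> \<longleftrightarrow>
     (\<forall>g. unitary_mat d (\<rho> g)) \<and>
     (\<forall>g h. \<rho> (mul g h) = \<rho> g * \<rho> h) \<and>
     (\<forall>j<d. \<forall>k<d. continuous_on UNIV (\<lambda>g. \<rho> g $$ (j, k)))"

definition irreducible_rep :: "nat \<Rightarrow> ('g \<Rightarrow> complex mat) \<Rightarrow> bool" where
  "irreducible_rep d \<rho> \<longleftrightarrow> d > 0 \<and>
     (\<forall>W \<subseteq> carrier_vec d.
        (0\<^sub>v d \<in> W \<and> (\<forall>v\<in>W. \<forall>w\<in>W. v + w \<in> W) \<and> (\<forall>a. \<forall>v\<in>W. a \<cdot>\<^sub>v v \<in> W) \<and>
         (\<forall>g. \<forall>v\<in>W. \<rho> g *\<^sub>v v \<in> W))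
        \<longrightarrow> W = {0\<^sub>v d} \<or> W = carrier_vec d)"

definition iso_rep :: "nat \<Rightarrow> ('g \<Rightarrow> complex mat) \<Rightarrow> nat \<Rightarrow> ('g \<Rightarrow> complex mat) \<Rightarrow> bool" where
  "iso_rep d \<rho> d' \<rho>' \<longleftrightarrow> d = d' \<and>
     (\<exists>T \<in> carrier_mat d d. invertible_mat T \<and> (\<forall>g. T * \<rho> g = \<rho>' g * T))"

definition msupport :: "'g::topological_space measure \<Rightarrow> 'g set" where
  "msupport \<mu> = {x. \<forall>U. open U \<longrightarrow> x \<in> U \<longrightarrow> emeasure \<mu> U > 0}"

definition fourier_coeff :: "'g measure \<Rightarrow> nat \<Rightarrow> ('g \<Rightarrow> complex mat) \<Rightarrow> complex mat" where
  "fourier_coeff \<mu> d \<rho> = mat d d (\<lambda>(j, k). integral\<^sup>L \<mu> (\<lambda>g. \<rho> g $$ (j, k)))"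

text \<open>The bound B_{1,\<pi>_1..\<pi>_m}(G,A); infimum over an empty set is +\<infinity>.\<close>
definition B_bound ::
  "nat \<Rightarrow> (nat \<Rightarrow> nat) \<Rightarrow> (nat \<Rightarrow> 'g \<Rightarrow> complex mat) \<Rightarrow> 'g set \<Rightarrow> ereal" where
  "B_bound m d \<pi> A = (INF X \<in> {X :: nat \<Rightarrow> complex mat.
       (\<forall>i\<in>{1..m}. psd_mat (d i) (X i)) \<and>
       (\<forall>g \<in> - A. 1 + (\<Sum>i=1..m. mtrace (\<pi> i g * transpose_mat (X i))) \<le> 0)}.
     ereal (1 + (\<Sum>i=1..m. Re (mtrace (X i)))))"

end

theory Submission
  imports Defs
begin

text \<open>Let \<open>X\<^sub>1, \<dots>, X\<^sub>m\<close> be feasible and \<open>M\<^sub>i = \<integral> \<pi>\<^sub>i d\<mu>\<close>. The function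
  \<open>f g = 1 + \<Sum>\<^sub>i tr (\<pi>\<^sub>i(g) X\<^sub>i\<^sup>T)\<close> is continuous and nonpositive on the complement of \<open>A\<close>,
  hence on its closure, which contains the support of \<open>\<mu>\<close>. Integrating against \<open>\<mu>\<close> gives
  \<open>1 + \<Sum>\<^sub>i tr (M\<^sub>i X\<^sub>i\<^sup>T) \<le> 0\<close>. Since \<open>M\<^sub>i + c I\<close> and \<open>X\<^sub>i\<close> are positive
  semidefinite, \<open>tr ((M\<^sub>i + c I) X\<^sub>i\<^sup>T) \<ge> 0\<close>, i.e. \<open>tr (M\<^sub>i X\<^sub>i\<^sup>T) \<ge> -c tr X\<^sub>i\<close>,
  and therefore \<open>1 \<le> c \<Sum>\<^sub>i tr X\<^sub>i\<close>. The trace inequality for positive semidefinite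
  \<open>P\<close> and \<open>X\<close> follows by writing \<open>X\<close> as a sum of rank-one matrices \<open>v v\<^sup>*\<close>, obtained by
  eliminating one row and column at a time as in the Cholesky decomposition.\<close>

text \<open>In the elimination argument an \<open>n \<times> n\<close> matrix is a function on indices below \<open>n\<close>,
  which avoids carrier bookkeeping.\<close>

definition quad_form :: "(nat \<Rightarrow> nat \<Rightarrow> complex) \<Rightarrow> nat \<Rightarrow> (nat \<Rightarrow> complex) \<Rightarrow> complex" where
  "quad_form X n w = (\<Sum>j<n. \<Sum>k<n. cnj (w j) * X j k * w k)"

definition psd_fun :: "nat \<Rightarrow> (nat \<Rightarrow> nat \<Rightarrow> complex) \<Rightarrow> bool" where
  "psd_fun n X \<longleftrightarrow> (\<forall>j<n. \<forall>k<n. X j k = cnj (X k j)) \<and> (\<forall>w. 0 \<le> quad_form X n w)"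

lemma psd_fun_hermitian: "psd_fun n X \<Longrightarrow> j < n \<Longrightarrow> k < n \<Longrightarrow> X j k = cnj (X k j)"
  unfolding psd_fun_def by blast

lemma psd_fun_quad_form_nonneg: "psd_fun n X \<Longrightarrow> 0 \<le> quad_form X n w"
  by (simp add: psd_fun_def)

lemma quad_form_two_point:
  assumes "r < n" "k < n"
  shows "quad_form X n (\<lambda>i. (if i = r then a else 0) + (if i = k then b else 0))
    = cnj a * X r r * a + cnj a * X r k * b + cnj b * X k r * a + cnj b * X k k * b"
  using assms
  by (simp add: quad_form_def if_distrib[of "\<lambda>x. _ * x"] if_distrib[of "\<lambda>x. x * _"]
      if_distrib[of cnj] distrib_left distrib_right sum.distrib cong: if_cong)

lemma quad_form_diff:
  "quad_form (\<lambda>j k. X j k - Y j k) n w = quad_form X n w - quad_form Y n w"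
  by (simp add: quad_form_def algebra_simps sum_subtractf)

lemma quad_form_outer:
  "quad_form (\<lambda>j k. v j * cnj (v k)) n w
    = cnj (\<Sum>k<n. cnj (v k) * w k) * (\<Sum>k<n. cnj (v k) * w k)"
  unfolding quad_form_def cnj_sum sum_product by (simp add: mult_ac)

lemma quad_form_cong_off_null_index:
  assumes "\<forall>k<n. Y r k = 0 \<and> Y k r = 0" and "\<forall>i. i \<noteq> r \<longrightarrow> w' i = w i"
  shows "quad_form Y n w' = quad_form Y n w"
  unfolding quad_form_def
proof (intro sum.cong refl)
  fix j k assume "j \<in> {..<n}" "k \<in> {..<n}"
  then show "cnj (w' j) * Y j k * w' k = cnj (w j) * Y j k * w k"
    using assms by (cases "j = r \<or> k = r") auto
qed

lemma psd_fun_diag_nonneg: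
  assumes "psd_fun n X" "r < n"
  shows "0 \<le> X r r"
  using psd_fun_quad_form_nonneg[OF assms(1), of "\<lambda>i. (if i = r then 1 else 0) + (if i = r then 0 else 0)"]
    quad_form_two_point[OF assms(2) assms(2), of X 1 0]
  by simp

lemma psd_fun_zero_diag_row:
  assumes X: "psd_fun n X" and r: "r < n" and k: "k < n" and diag: "X r r = 0"
  shows "X r k = 0"
proof (rule ccontr)
  assume "X r k \<noteq> 0"
  define \<beta> where "\<beta> = (cmod (X r k))\<^sup>2"
  define t where "t = (Re (X k k) + 1) / (2 * \<beta>)"
  have "\<beta> > 0" using \<open>X r k \<noteq> 0\<close> by (simp add: \<beta>_def)
  have herm: "X k r = cnj (X r k)" using psd_fun_hermitian[OF X k r] .
  let ?w = "\<lambda>i. (if i = r then - of_real t * X r k else 0) + (if i = k then 1 else 0)"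
  have "quad_form X n ?w = X k k - of_real (2 * t) * (X r k * cnj (X r k))"
    unfolding quad_form_two_point[OF r k] using diag herm by (simp add: algebra_simps)
  also have "\<dots> = X k k - of_real (2 * t * \<beta>)"
    unfolding \<beta>_def complex_norm_square[symmetric] by simp
  also have "2 * t * \<beta> = Re (X k k) + 1" using \<open>\<beta> > 0\<close> by (simp add: t_def)
  finally have "0 \<le> X k k - of_real (Re (X k k) + 1)"
    using psd_fun_quad_form_nonneg[OF X, of ?w] by simp
  then show False by (simp add: less_eq_complex_def)
qed

lemma psd_fun_subtract_pivot:
  assumes X: "psd_fun n X" and r: "r < n" and pivot: "X r r \<noteq> 0"
    and v_def: "v = (\<lambda>j. X j r / of_real (sqrt (Re (X r r))))"
  shows "\<forall>k<n. X r k = v r * cnj (v k) \<and> X k r = v k * cnj (v r)"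
    and "psd_fun n (\<lambda>j k. X j k - v j * cnj (v k))"
proof -
  define s where "s = sqrt (Re (X r r))"
  have "0 \<le> X r r" using psd_fun_diag_nonneg[OF X r] .
  then have "s > 0" and Xrr: "X r r = of_real s * of_real s"
    using pivot by (auto simp: s_def less_eq_complex_def complex_eq_iff)
  have vr: "v r = of_real s" using \<open>s > 0\<close> by (simp add: v_def Xrr flip: s_def)
  show pivot_row: "\<forall>k<n. X r k = v r * cnj (v k) \<and> X k r = v k * cnj (v r)"
  proof (intro allI impI conjI)
    fix k assume "k < n"
    then have "X r k = cnj (X k r)" using psd_fun_hermitian[OF X r] by blast
    then show "X r k = v r * cnj (v k)" using \<open>s > 0\<close> by (simp add: v_def Xrr flip: s_def)
    show "X k r = v k * cnj (v r)" using \<open>s > 0\<close> by (simp add: v_def Xrr flip: s_def)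
  qed
  let ?Y = "\<lambda>j k. X j k - v j * cnj (v k)"
  have "0 \<le> quad_form ?Y n w" for w
  proof -
    define z where "z = (\<lambda>w. \<Sum>k<n. cnj (v k) * w k)"
    define w' where "w' = (\<lambda>i. w i + (if i = r then - z w / cnj (v r) else 0))"
    have "z w' = z w + cnj (v r) * (- z w / cnj (v r))"
      using r by (simp add: z_def w'_def distrib_left sum.distrib if_distrib[of "\<lambda>x. _ * x"] cong: if_cong)
    then have "z w' = 0" using \<open>s > 0\<close> by (simp add: vr)
    \<comment> \<open>\<open>?Y\<close> ignores coordinate \<open>r\<close>, which is used to make \<open>w\<close> orthogonal to \<open>v\<close>.\<close>
    have "quad_form ?Y n w = quad_form ?Y n w'"
      by (rule quad_form_cong_off_null_index[of n _ r, symmetric]) (use pivot_row in \<open>auto simp: w'_def\<close>)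
    also have "\<dots> = quad_form X n w' - cnj (z w') * z w'"
      by (simp add: quad_form_diff quad_form_outer z_def)
    also have "\<dots> = quad_form X n w'" using \<open>z w' = 0\<close> by simp
    finally show ?thesis using psd_fun_quad_form_nonneg[OF X] by simp
  qed
  moreover have "\<forall>j<n. \<forall>k<n. ?Y j k = cnj (?Y k j)"
    using psd_fun_hermitian[OF X] by (metis complex_cnj_diff complex_cnj_mult complex_cnj_cnj mult.commute)
  ultimately show "psd_fun n ?Y" unfolding psd_fun_def by blast
qed

lemma psd_fun_eq_sum_outer_from:
  assumes "r \<le> n" and "psd_fun n X" and "\<forall>j<n. \<forall>k<n. j < r \<or> k < r \<longrightarrow> X j k = 0"
  shows "\<exists>vs. \<forall>j<n. \<forall>k<n. X j k = (\<Sum>v\<leftarrow>vs. v j * cnj (v k))"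
  using assms
proof (induction r arbitrary: X rule: inc_induct)
  case base
  then show ?case by (intro exI[of _ "[]"]) simp
next
  case (step r)
  show ?case
  proof (cases "X r r = 0")
    case True
    have "X r k = 0 \<and> X k r = 0" if "k < n" for k
      using psd_fun_zero_diag_row[OF step.prems(1) step.hyps(2) that True]
        psd_fun_hermitian[OF step.prems(1) that step.hyps(2)] by simp
    then have "\<forall>j<n. \<forall>k<n. j < Suc r \<or> k < Suc r \<longrightarrow> X j k = 0"
      using step.prems(2) less_Suc_eq by auto
    then show ?thesis using step.IH step.prems(1) by blast
  next
    case False
    define v where "v = (\<lambda>j. X j r / of_real (sqrt (Re (X r r))))"
    let ?Y = "\<lambda>j k. X j k - v j * cnj (v k)"
    note pivot = psd_fun_subtract_pivot[OF step.prems(1) step.hyps(2) False v_def]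
    have v_zero: "v j = 0" if "j < r" for j
      using step.prems(2) that step.hyps(2) by (simp add: v_def)
    have Y_zero: "\<forall>j<n. \<forall>k<n. j < Suc r \<or> k < Suc r \<longrightarrow> ?Y j k = 0"
    proof (intro allI impI)
      fix j k assume jk: "j < n" "k < n" and "j < Suc r \<or> k < Suc r"
      then consider "j = r" | "k = r" | "j < r" | "k < r" by linarith
      then show "?Y j k = 0"
      proof cases
        case 1
        then show ?thesis using pivot(1) jk by simp
      next
        case 2
        then show ?thesis using pivot(1) jk by simp
      next
        case 3
        then show ?thesis using v_zero step.prems(2) jk by simp
      next
        case 4
        then show ?thesis using v_zero step.prems(2) jk by simp
      qed
    qed
    obtain vs where "\<forall>j<n. \<forall>k<n. ?Y j k = (\<Sum>v\<leftarrow>vs. v j * cnj (v k))"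
      using step.IH[OF pivot(2) Y_zero] by blast
    then show ?thesis by (intro exI[of _ "v # vs"]) (simp add: algebra_simps)
  qed
qed

corollary psd_fun_eq_sum_outer:
  assumes "psd_fun n X"
  shows "\<exists>vs. \<forall>j<n. \<forall>k<n. X j k = (\<Sum>v\<leftarrow>vs. v j * cnj (v k))"
  using psd_fun_eq_sum_outer_from[of 0 n X] assms by simp

lemma psd_fun_pairing_nonneg:
  assumes P: "psd_fun n P" and X: "psd_fun n X"
  shows "0 \<le> (\<Sum>j<n. \<Sum>k<n. P j k * X j k)"
proof -
  obtain vs where "\<forall>j<n. \<forall>k<n. X j k = (\<Sum>v\<leftarrow>vs. v j * cnj (v k))"
    using psd_fun_eq_sum_outer[OF X] by blast
  then have vs: "X j k = (\<Sum>i<length vs. (vs ! i) j * cnj ((vs ! i) k))" if "j < n" "k < n" for j k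
    using that by (simp add: sum_list_sum_nth atLeast0LessThan)
  have "(\<Sum>j<n. \<Sum>k<n. P j k * X j k) = (\<Sum>i<length vs. quad_form P n (\<lambda>k. cnj ((vs ! i) k)))"
    by (simp add: vs quad_form_def sum_distrib_left sum.swap[of _ "{..<length vs}"] mult_ac)
  also have "0 \<le> \<dots>" by (simp add: sum_nonneg psd_fun_quad_form_nonneg[OF P])
  finally show ?thesis .
qed

lemma psd_mat_imp_psd_fun:
  assumes "psd_mat n X"
  shows "psd_fun n (\<lambda>j k. X $$ (j, k))"
proof -
  have X: "X \<in> carrier_mat n n" and adj: "mat_adjoint X = X"
    and nonneg: "\<And>v. v \<in> carrier_vec n \<Longrightarrow> 0 \<le> (X *\<^sub>v v) \<bullet>c v"
    using assms unfolding psd_mat_def by auto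
  have "X $$ (j, k) = cnj (X $$ (k, j))" if "j < n" "k < n" for j k
    using X that arg_cong[OF adj, of "\<lambda>M. M $$ (j, k)"]
    by (simp add: mat_adjoint_def mat_of_rows_index)
  moreover have "0 \<le> quad_form (\<lambda>j k. X $$ (j, k)) n w" for w
  proof -
    have "(X *\<^sub>v vec n w) \<bullet>c vec n w = quad_form (\<lambda>j k. X $$ (j, k)) n w"
      using X by (simp add: quad_form_def scalar_prod_def sum_distrib_left lessThan_atLeast0 mult_ac)
    then show ?thesis using nonneg[of "vec n w"] by simp
  qed
  ultimately show ?thesis unfolding psd_fun_def by blast
qed

lemma mtrace_mult_transpose:
  assumes "A \<in> carrier_mat n n" "B \<in> carrier_mat n n"
  shows "mtrace (A * transpose_mat B) = (\<Sum>j<n. \<Sum>k<n. A $$ (j, k) * B $$ (j, k))"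
  using assms by (simp add: mtrace_def scalar_prod_def lessThan_atLeast0)

lemma psd_mat_trace_mult_transpose_nonneg:
  assumes "psd_mat n P" "psd_mat n X"
  shows "0 \<le> mtrace (P * transpose_mat X)"
proof -
  have "P \<in> carrier_mat n n" "X \<in> carrier_mat n n" using assms by (auto simp: psd_mat_def)
  then show ?thesis
    using psd_fun_pairing_nonneg[OF psd_mat_imp_psd_fun[OF assms(1)] psd_mat_imp_psd_fun[OF assms(2)]]
    by (simp add: mtrace_mult_transpose)
qed

lemma trace_mult_transpose_lower_bound:
  assumes P: "P \<in> carrier_mat n n" and shifted: "psd_mat n (P + of_real c \<cdot>\<^sub>m 1\<^sub>m n)"
    and X: "psd_mat n X"
  shows "- c * Re (mtrace X) \<le> Re (mtrace (P * transpose_mat X))"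
proof -
  have X_carrier: "X \<in> carrier_mat n n" using X by (simp add: psd_mat_def)
  have "mtrace ((P + of_real c \<cdot>\<^sub>m 1\<^sub>m n) * transpose_mat X)
      = (\<Sum>j<n. \<Sum>k<n. (P $$ (j, k) + (if j = k then of_real c else 0)) * X $$ (j, k))"
    using P X_carrier by (simp add: mtrace_mult_transpose[of _ n] if_distrib[of "\<lambda>x. _ * x"] cong: if_cong)
  also have "\<dots> = mtrace (P * transpose_mat X) + of_real c * mtrace X"
    unfolding mtrace_mult_transpose[OF P X_carrier] using X_carrier
    by (simp add: mtrace_def distrib_right sum.distrib sum_distrib_left if_distrib[of "\<lambda>x. x * _"]
        cong: if_cong)
  finally have "mtrace ((P + of_real c \<cdot>\<^sub>m 1\<^sub>m n) * transpose_mat X)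
      = mtrace (P * transpose_mat X) + of_real c * mtrace X" .
  moreover have "0 \<le> mtrace ((P + of_real c \<cdot>\<^sub>m 1\<^sub>m n) * transpose_mat X)"
    using psd_mat_trace_mult_transpose_nonneg[OF shifted X] .
  ultimately show ?thesis by (simp add: less_eq_complex_def)
qed

lemma integrable_continuous_compact_space:
  fixes h :: "'g::topological_space \<Rightarrow> 'b::{banach, second_countable_topology}"
  assumes "compact (UNIV :: 'g set)" and "continuous_on UNIV h"
    and "finite_measure \<mu>" and "sets \<mu> = sets borel"
  shows "integrable \<mu> h"
proof -
  have "compact (range h)" using compact_continuous_image[OF assms(2,1)] .
  then obtain B where B: "\<And>x. norm (h x) \<le> B"
    using compact_imp_bounded[of "range h"] unfolding bounded_iff by blast
  have "h \<in> borel_measurable \<mu>"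
    by (subst measurable_cong_sets[OF assms(4) refl]) (rule borel_measurable_continuous_onI[OF assms(2)])
  moreover have "AE x in \<mu>. norm (h x) \<le> B" using B by simp
  ultimately show ?thesis by (intro finite_measure.integrable_const_bound[OF assms(3)])
qed

lemma compact_disjoint_msupport_null:
  fixes K :: "'g::t2_space set"
  assumes "compact K" and "K \<inter> msupport \<mu> = {}" and "sets \<mu> = sets borel"
  shows "K \<in> null_sets \<mu>"
proof -
  define \<U> where "\<U> = {U. open U \<and> emeasure \<mu> U = 0}"
  have "K \<subseteq> \<Union>\<U>"
  proof
    fix x assume "x \<in> K"
    then have "x \<notin> msupport \<mu>" using assms(2) by blast
    then obtain U where "open U" "x \<in> U" "\<not> emeasure \<mu> U > 0" unfolding msupport_def by blast
    then show "x \<in> \<Union>\<U>" unfolding \<U>_def by (auto simp: not_gr_zero)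
  qed
  then obtain \<F> where \<F>: "\<F> \<subseteq> \<U>" "finite \<F>" "K \<subseteq> \<Union>\<F>"
    using compactE[OF assms(1)] \<U>_def by blast
  have "\<And>U. U \<in> \<F> \<Longrightarrow> U \<in> null_sets \<mu>"
    using \<F>(1) assms(3) unfolding \<U>_def null_sets_def by auto
  then have "\<Union>\<F> \<in> null_sets \<mu>" using null_sets.finite_UN[OF \<F>(2), of "\<lambda>U. U"] by simp
  moreover have "K \<in> sets \<mu>" using assms(3) compact_imp_closed[OF assms(1)] by simp
  ultimately show ?thesis using null_sets_subset \<F>(3) by blast
qed

lemma AE_nonpos_on_msupport:
  fixes F :: "'g::t2_space \<Rightarrow> real"
  assumes "compact (UNIV :: 'g set)" and F: "continuous_on UNIV F" and "sets \<mu> = sets borel"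
    and nonpos: "\<forall>x\<in>msupport \<mu>. F x \<le> 0"
  shows "AE x in \<mu>. F x \<le> 0"
proof (rule AE_I')
  define K where "K = (\<lambda>n::nat. {x. inverse (real (Suc n)) \<le> F x})"
  have "K n \<in> null_sets \<mu>" for n
  proof (rule compact_disjoint_msupport_null[OF _ _ assms(3)])
    have "closed (K n)" unfolding K_def by (intro closed_Collect_le continuous_on_const F)
    then show "compact (K n)" using compact_Int_closed[OF assms(1)] by fastforce
    have "False" if "x \<in> K n" "x \<in> msupport \<mu>" for x
    proof -
      have "inverse (real (Suc n)) \<le> F x" "F x \<le> 0" using that nonpos by (auto simp: K_def)
      moreover have "0 < inverse (real (Suc n))" by simp
      ultimately show False by linarith
    qed
    then show "K n \<inter> msupport \<mu> = {}" by blast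
  qed
  then show "\<Union> (range K) \<in> null_sets \<mu>" by blast
  show "{x \<in> space \<mu>. \<not> F x \<le> 0} \<subseteq> \<Union> (range K)"
  proof safe
    fix x assume "\<not> F x \<le> 0"
    then obtain n where "inverse (real (Suc n)) < F x" using reals_Archimedean[of "F x"] by auto
    then show "x \<in> \<Union> (range K)" unfolding K_def by (auto intro: less_imp_le)
  qed
qed

lemma integral_nonpos_if_nonpos_on:
  fixes F :: "'g::t2_space \<Rightarrow> real"
  assumes "compact (UNIV :: 'g set)" and F: "continuous_on UNIV F" and "sets \<mu> = sets borel"
    and "msupport \<mu> \<subseteq> closure S" and "\<forall>x\<in>S. F x \<le> 0"
  shows "integral\<^sup>L \<mu> F \<le> 0"
proof -
  have "closure S \<subseteq> {x. F x \<le> 0}"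
    using assms(5) by (intro closure_minimal) (auto intro: closed_Collect_le F continuous_on_const)
  then have "AE x in \<mu>. F x \<le> 0"
    using AE_nonpos_on_msupport[OF assms(1-3)] assms(4) by blast
  then have "0 \<le> integral\<^sup>L \<mu> (\<lambda>x. - F x)" by (intro integral_nonneg_AE) auto
  then show ?thesis by simp
qed

lemma continuous_on_mtrace_mult_transpose:
  fixes \<rho> :: "'g::topological_space \<Rightarrow> complex mat"
  assumes "\<And>g. \<rho> g \<in> carrier_mat n n" and "X \<in> carrier_mat n n"
    and "\<And>j k. j < n \<Longrightarrow> k < n \<Longrightarrow> continuous_on UNIV (\<lambda>g. \<rho> g $$ (j, k))"
  shows "continuous_on UNIV (\<lambda>g. mtrace (\<rho> g * transpose_mat X))"
proof -
  have "continuous_on UNIV (\<lambda>g. \<Sum>j<n. \<Sum>k<n. \<rho> g $$ (j, k) * X $$ (j, k))"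
    by (auto intro!: continuous_intros assms(3))
  then show ?thesis by (simp add: mtrace_mult_transpose[OF assms(1,2)])
qed

lemma integral_mtrace_mult_transpose:
  assumes "\<And>g. \<rho> g \<in> carrier_mat n n" and "X \<in> carrier_mat n n"
    and "\<And>j k. j < n \<Longrightarrow> k < n \<Longrightarrow> integrable \<mu> (\<lambda>g. \<rho> g $$ (j, k))"
  shows "integral\<^sup>L \<mu> (\<lambda>g. mtrace (\<rho> g * transpose_mat X))
    = mtrace (fourier_coeff \<mu> n \<rho> * transpose_mat X)"
proof -
  have "integral\<^sup>L \<mu> (\<lambda>g. \<Sum>j<n. \<Sum>k<n. \<rho> g $$ (j, k) * X $$ (j, k))
      = (\<Sum>j<n. \<Sum>k<n. integral\<^sup>L \<mu> (\<lambda>g. \<rho> g $$ (j, k)) * X $$ (j, k))"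
  proof (subst Bochner_Integration.integral_sum)
    show "integrable \<mu> (\<lambda>g. \<Sum>k<n. \<rho> g $$ (j, k) * X $$ (j, k))" if "j \<in> {..<n}" for j
      using that by (auto intro!: assms(3))
  qed (auto intro!: sum.cong simp: assms(3) Bochner_Integration.integral_sum)
  then show ?thesis
    using assms(2)
    by (simp add: mtrace_mult_transpose[OF assms(1,2)] mtrace_mult_transpose[OF _ assms(2)] fourier_coeff_def)
qed

lemma integral_trace_constraint_nonpos:
  fixes \<pi> :: "nat \<Rightarrow> 'g::t2_space \<Rightarrow> complex mat"
  assumes "compact (UNIV :: 'g set)" and prob: "prob_space \<mu>" and borel: "sets \<mu> = sets borel"
    and supp: "msupport \<mu> \<subseteq> closure S"
    and carrier: "\<And>i g. i \<in> I \<Longrightarrow> \<pi> i g \<in> carrier_mat (d i) (d i)"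
    and cont: "\<And>i j k. i \<in> I \<Longrightarrow> j < d i \<Longrightarrow> k < d i \<Longrightarrow> continuous_on UNIV (\<lambda>g. \<pi> i g $$ (j, k))"
    and X: "\<And>i. i \<in> I \<Longrightarrow> X i \<in> carrier_mat (d i) (d i)"
    and feasible: "\<forall>g\<in>S. Re (1 + (\<Sum>i\<in>I. mtrace (\<pi> i g * transpose_mat (X i)))) \<le> 0"
  shows "Re (1 + (\<Sum>i\<in>I. mtrace (fourier_coeff \<mu> (d i) (\<pi> i) * transpose_mat (X i)))) \<le> 0"
proof -
  define f where "f = (\<lambda>g. 1 + (\<Sum>i\<in>I. mtrace (\<pi> i g * transpose_mat (X i))))"
  have fin: "finite_measure \<mu>" using prob by (simp add: prob_space_def)
  note integrable = integrable_continuous_compact_space[OF assms(1) _ fin borel]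
  have cont_trace: "continuous_on UNIV (\<lambda>g. mtrace (\<pi> i g * transpose_mat (X i)))" if "i \<in> I" for i
    by (rule continuous_on_mtrace_mult_transpose[OF carrier[OF that] X[OF that] cont[OF that]])
  then have "continuous_on UNIV f" unfolding f_def by (intro continuous_intros) auto
  have "integral\<^sup>L \<mu> f = 1 + (\<Sum>i\<in>I. integral\<^sup>L \<mu> (\<lambda>g. mtrace (\<pi> i g * transpose_mat (X i))))"
    unfolding f_def using prob cont_trace
    by (simp add: integrable Bochner_Integration.integral_sum prob_space.prob_space)
  also have "\<dots> = 1 + (\<Sum>i\<in>I. mtrace (fourier_coeff \<mu> (d i) (\<pi> i) * transpose_mat (X i)))"
    using integral_mtrace_mult_transpose[OF carrier X integrable[OF cont]] by simp
  finally have "Re (integral\<^sup>L \<mu> f) = Re (1 + (\<Sum>i\<in>I. mtrace (fourier_coeff \<mu> (d i) (\<pi> i) * transpose_mat (X i))))"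
    by simp
  moreover have "integral\<^sup>L \<mu> (\<lambda>g. Re (f g)) \<le> 0"
    using integral_nonpos_if_nonpos_on[OF assms(1) continuous_on_Re[OF \<open>continuous_on UNIV f\<close>] borel supp]
      feasible unfolding f_def by blast
  ultimately show ?thesis
    using integrable[OF \<open>continuous_on UNIV f\<close>] by simp
qed

theorem lemma2p5:
  fixes mul :: "'g::t2_space \<Rightarrow> 'g \<Rightarrow> 'g" and iv :: "'g \<Rightarrow> 'g" and e :: 'g
    and A :: "'g set" and m :: nat and d :: "nat \<Rightarrow> nat"
    and \<pi> :: "nat \<Rightarrow> 'g \<Rightarrow> complex mat" and \<mu> :: "'g measure" and c :: real
  assumes G: "compact_group mul iv e"
    and A_sym: "iv ` A = A" and e_in: "e \<in> A"
    and reps: "\<forall>i\<in>{0..m}. unitary_rep mul (d i) (\<pi> i) \<and> irreducible_rep (d i) (\<pi> i)"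
    and distinct: "\<forall>i\<in>{0..m}. \<forall>j\<in>{0..m}. i \<noteq> j \<longrightarrow> \<not> iso_rep (d i) (\<pi> i) (d j) (\<pi> j)"
    and triv: "d 0 = 1" "\<forall>g. \<pi> 0 g = 1\<^sub>m 1"
    and prob: "prob_space \<mu>" and borel: "sets \<mu> = sets borel"
    and supp: "msupport \<mu> \<subseteq> closure (- A)"
    and c_pos: "c > 0"
    and coeff: "\<forall>i\<in>{1..m}. psd_mat (d i) (fourier_coeff \<mu> (d i) (\<pi> i) + complex_of_real c \<cdot>\<^sub>m 1\<^sub>m (d i))"
  shows "B_bound m d \<pi> A \<ge> ereal (1 + 1 / c)"
  unfolding B_bound_def
proof (rule INF_greatest, clarify)
  fix X assume psd: "\<forall>i\<in>{1..m}. psd_mat (d i) (X i)"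
    and feasible: "\<forall>g\<in>- A. 1 + (\<Sum>i=1..m. mtrace (\<pi> i g * transpose_mat (X i))) \<le> 0"
  have carrier: "\<pi> i g \<in> carrier_mat (d i) (d i)" "X i \<in> carrier_mat (d i) (d i)" if "i \<in> {1..m}" for i g
    using reps psd that by (auto simp: unitary_rep_def unitary_mat_def psd_mat_def)
  have averaged: "Re (1 + (\<Sum>i=1..m. mtrace (fourier_coeff \<mu> (d i) (\<pi> i) * transpose_mat (X i)))) \<le> 0"
  proof (rule integral_trace_constraint_nonpos[OF _ prob borel supp])
    show "compact (UNIV :: 'g set)" using G by (simp add: compact_group_def)
    show "continuous_on UNIV (\<lambda>g. \<pi> i g $$ (j, k))" if "i \<in> {1..m}" "j < d i" "k < d i" for i j k
      using reps that by (auto simp: unitary_rep_def)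
  qed (use carrier feasible in \<open>auto simp: less_eq_complex_def\<close>)
  have bound: "- c * Re (mtrace (X i))
      \<le> Re (mtrace (fourier_coeff \<mu> (d i) (\<pi> i) * transpose_mat (X i)))" if "i \<in> {1..m}" for i
    using trace_mult_transpose_lower_bound[of _ "d i"] coeff psd that by (simp add: fourier_coeff_def)
  have "(\<Sum>i=1..m. - c * Re (mtrace (X i)))
      \<le> (\<Sum>i=1..m. Re (mtrace (fourier_coeff \<mu> (d i) (\<pi> i) * transpose_mat (X i))))"
    by (rule sum_mono) (rule bound)
  with averaged have "1 \<le> c * (\<Sum>i=1..m. Re (mtrace (X i)))"
    by (simp add: Re_sum sum_distrib_left sum_negf)
  then show "ereal (1 + 1 / c) \<le> ereal (1 + (\<Sum>i=1..m. Re (mtrace (X i))))"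
    using c_pos by (simp add: field_simps)
qed

end
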